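(* Let $p\geq1$ and $A>0$. Let $\rho(\tau)$ be the covariance function of a centered stationary random process, and suppose $\rho$ is continuous and $\rho(T)\to0$ as $T\to\infty$. For $T>0$ and $\tau\in[0,A]$ put \[ \psi(T,\tau)=\frac{2}{T^2}\int_0^{T}(T-u)\bigl(\rho^2(u)+\rho(u+\tau)\rho(u-\tau)\bigr)\,du, \qquad C_p=C_p(T)=\int_0^{A}\bigl(\psi(T,\tau)\bigr)^{p/2}\,d\tau . \] Then $C_p\to0$ as $T\to\infty$.
   Context: The covariance function $\rho$ of a stationary process is an even function defined on all of $\mathbb{R}$. *)

theory Defs
  imports "HOL-Probability.Probability"
begin

definition psi :: "(real \<Rightarrow> real) \<Rightarrow> real \<Rightarrow> real \<Rightarrow> real" where
  "psi \<rho> T \<tau> = 2 / T\<^sup>2 * integral {0..T}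
      (\<lambda>u. (T - u) * ((\<rho> u)\<^sup>2 + \<rho> (u + \<tau>) * \<rho> (u - \<tau>)))"

definition C_p :: "(real \<Rightarrow> real) \<Rightarrow> real \<Rightarrow> real \<Rightarrow> real \<Rightarrow> real" where
  "C_p \<rho> p A T = integral {0..A} (\<lambda>\<tau>. (psi \<rho> T \<tau>) powr (p / 2))"

end

theory Submission
  imports Defs
begin

text \<open>Since \<open>\<rho>\<close> is bounded and tends to 0, the integrand of \<open>psi \<rho> T \<tau>\<close> is bounded by a constant
  on a fixed initial interval \<open>[0, L]\<close> and is uniformly small beyond it. The kernel \<open>T - u\<close> is at
  most \<open>T\<close>, so \<open>psi \<rho> T \<tau>\<close> is at most \<open>O(L/T)\<close> plus twice that small bound, uniformly in
  \<open>\<tau> \<in> [0, A]\<close>; hence so is \<open>psi\<^sup>p\<^sup>/\<^sup>2\<close>, and its integral over \<open>[0, A]\<close> tends to 0.\<close>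

lemma continuous_tendsto_bounded_atLeast:
  fixes f :: "real \<Rightarrow> real"
  assumes "continuous_on UNIV f" and "(f \<longlongrightarrow> c) at_top"
  obtains B where "\<And>x. x \<ge> a \<Longrightarrow> \<bar>f x\<bar> \<le> B"
proof -
  obtain N where N: "\<And>x. x \<ge> N \<Longrightarrow> \<bar>f x - c\<bar> \<le> 1"
    using assms(2)[THEN tendstoD, of 1] by (force simp: eventually_at_top_linorder dist_real_def)
  have "bounded (f ` {a..N})"
    by (intro compact_imp_bounded compact_continuous_image continuous_on_subset[OF assms(1)]) auto
  then obtain B' where B': "\<And>x. x \<in> {a..N} \<Longrightarrow> \<bar>f x\<bar> \<le> B'"
    unfolding bounded_iff by (metis image_eqI real_norm_def)
  show ?thesis
  proof (rule that[of "max B' (\<bar>c\<bar> + 1)"])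
    fix x assume "x \<ge> a"
    show "\<bar>f x\<bar> \<le> max B' (\<bar>c\<bar> + 1)"
    proof (cases "x \<le> N")
      case True then show ?thesis using B'[of x] \<open>x \<ge> a\<close> by auto
    next
      case False then show ?thesis using N[of x] by auto
    qed
  qed
qed

lemma abs_square_add_mult_le:
  fixes x y z K :: real
  assumes "\<bar>x\<bar> \<le> K" "\<bar>y\<bar> \<le> K" "\<bar>z\<bar> \<le> K"
  shows "\<bar>x\<^sup>2 + y * z\<bar> \<le> 2 * K\<^sup>2"
proof -
  have "\<bar>x\<^sup>2\<bar> \<le> K\<^sup>2"
    using assms(1) by (metis abs_ge_zero abs_power2 power2_abs power_mono)
  moreover have "\<bar>y * z\<bar> \<le> K * K"
    unfolding abs_mult using assms(2,3) by (intro mult_mono) auto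
  ultimately show ?thesis
    using abs_triangle_ineq[of "x\<^sup>2" "y * z"] by (simp add: power2_eq_square)
qed

text \<open>No integrability is needed: a non-integrable function has integral 0.\<close>

lemma abs_integral_le_bound:
  fixes f :: "real \<Rightarrow> real"
  assumes "a \<le> b" and "\<And>x. x \<in> {a..b} \<Longrightarrow> \<bar>f x\<bar> \<le> K"
  shows "\<bar>integral {a..b} f\<bar> \<le> K * (b - a)"
proof -
  have "K \<ge> 0" using assms(2)[of a] \<open>a \<le> b\<close> by auto
  show ?thesis
  proof (cases "f integrable_on {a..b}")
    case True
    then show ?thesis
      using has_integral_bound[of K f "integral {a..b} f" a b] \<open>K \<ge> 0\<close> assms
      by (simp add: integrable_integral)
  next
    case False
    then show ?thesis using \<open>K \<ge> 0\<close> assms by (simp add: not_integrable_integral)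
  qed
qed

lemma triangular_mean_bound:
  fixes g :: "real \<Rightarrow> real"
  assumes cont: "continuous_on {0..T} g" and L: "0 \<le> L" "L < T"
    and head: "\<And>u. u \<in> {0..L} \<Longrightarrow> \<bar>g u\<bar> \<le> B"
    and tail: "\<And>u. u \<in> {L..T} \<Longrightarrow> \<bar>g u\<bar> \<le> d"
  shows "\<bar>2 / T\<^sup>2 * integral {0..T} (\<lambda>u. (T - u) * g u)\<bar> \<le> 2 * B * L / T + 2 * d"
proof -
  define f where "f = (\<lambda>u. (T - u) * g u)"
  have T: "T > 0" using L by linarith
  have d: "d \<ge> 0" using tail[of T] L by auto
  have f_int: "f integrable_on {0..T}"
    unfolding f_def by (intro integrable_continuous_interval continuous_intros cont)
  have f_le: "\<bar>f u\<bar> \<le> T * K" if "u \<in> {0..T}" "\<bar>g u\<bar> \<le> K" for u K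
    unfolding f_def abs_mult using that by (intro mult_mono) auto
  have "integral {0..T} f = integral {0..L} f + integral {L..T} f"
    using Henstock_Kurzweil_Integration.integral_combine[OF _ _ f_int, of L] L by simp
  moreover have "\<bar>integral {0..L} f\<bar> \<le> T * B * (L - 0)"
    using L head f_le by (intro abs_integral_le_bound) auto
  moreover have "\<bar>integral {L..T} f\<bar> \<le> T * d * (T - L)"
    using L tail f_le by (intro abs_integral_le_bound) auto
  moreover have "T * d * (T - L) \<le> T * d * T"
    using L T d by (intro mult_left_mono) auto
  ultimately have "\<bar>integral {0..T} f\<bar> \<le> T * B * L + T * d * T"
    by (smt (verit))
  then have "\<bar>2 / T\<^sup>2 * integral {0..T} f\<bar> \<le> 2 / T\<^sup>2 * (T * B * L + T * d * T)"
    by (simp add: abs_mult divide_right_mono)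
  also have "\<dots> = 2 * B * L / T + 2 * d"
    using T by (simp add: field_simps power2_eq_square)
  finally show ?thesis unfolding f_def .
qed

lemma psi_uniformly_small:
  fixes \<rho> :: "real \<Rightarrow> real"
  assumes cont: "continuous_on UNIV \<rho>" and lim: "(\<rho> \<longlongrightarrow> 0) at_top" and "\<epsilon> > 0"
  shows "\<forall>\<^sub>F T in at_top. \<forall>\<tau>\<in>{0..A}. \<bar>psi \<rho> T \<tau>\<bar> \<le> \<epsilon>"
proof -
  obtain B where B: "\<And>x. x \<ge> -A \<Longrightarrow> \<bar>\<rho> x\<bar> \<le> B"
    using continuous_tendsto_bounded_atLeast[OF cont lim] by blast
  define d where "d = sqrt (\<epsilon> / 8)"
  have "d > 0" and d2: "2 * (2 * d\<^sup>2) = \<epsilon> / 2"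
    using \<open>\<epsilon> > 0\<close> unfolding d_def by simp_all
  obtain N where N: "\<And>x. x \<ge> N \<Longrightarrow> \<bar>\<rho> x\<bar> \<le> d"
    using lim[THEN tendstoD, OF \<open>d > 0\<close>] by (force simp: eventually_at_top_linorder dist_real_def)
  define L where "L = max 0 (N + A)"
  have "L \<ge> 0" unfolding L_def by simp
  have "\<bar>psi \<rho> T \<tau>\<bar> \<le> \<epsilon>" if T: "T \<ge> max (L + 1) (8 * B\<^sup>2 * L / \<epsilon> + 1)"
    and \<tau>: "\<tau> \<in> {0..A}" for T \<tau>
  proof -
    have "T > 0" and "L < T" and "8 * B\<^sup>2 * L < \<epsilon> * T"
      using T \<open>L \<ge> 0\<close> \<open>\<epsilon> > 0\<close> by (auto simp: field_simps)
    have "\<bar>psi \<rho> T \<tau>\<bar> \<le> 2 * (2 * B\<^sup>2) * L / T + 2 * (2 * d\<^sup>2)"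
      unfolding psi_def
    proof (rule triangular_mean_bound[OF _ \<open>L \<ge> 0\<close> \<open>L < T\<close>])
      show "continuous_on {0..T} (\<lambda>u. (\<rho> u)\<^sup>2 + \<rho> (u + \<tau>) * \<rho> (u - \<tau>))"
        by (intro continuous_intros continuous_on_compose2[OF cont]) auto
      show "\<bar>(\<rho> u)\<^sup>2 + \<rho> (u + \<tau>) * \<rho> (u - \<tau>)\<bar> \<le> 2 * B\<^sup>2" if "u \<in> {0..L}" for u
        using that \<tau> by (intro abs_square_add_mult_le B) auto
      show "\<bar>(\<rho> u)\<^sup>2 + \<rho> (u + \<tau>) * \<rho> (u - \<tau>)\<bar> \<le> 2 * d\<^sup>2" if "u \<in> {L..T}" for u
        using that \<tau> unfolding L_def by (intro abs_square_add_mult_le N) auto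
    qed
    moreover have "2 * (2 * B\<^sup>2) * L / T \<le> \<epsilon> / 2"
      using \<open>T > 0\<close> \<open>8 * B\<^sup>2 * L < \<epsilon> * T\<close> by (simp add: field_simps)
    ultimately show ?thesis using d2 by linarith
  qed
  then show ?thesis
    unfolding eventually_at_top_linorder by blast
qed

theorem theorem4:
  fixes M :: "'a measure" and X :: "real \<Rightarrow> 'a \<Rightarrow> real"
    and \<rho> :: "real \<Rightarrow> real" and p A :: real
  assumes "p \<ge> 1" and "A > 0"
    and "prob_space M"
    and "\<And>t. X t \<in> borel_measurable M"
    and "\<And>t. integrable M (\<lambda>\<omega>. (X t \<omega>)\<^sup>2)"
    and "\<And>t. (\<integral>\<omega>. X t \<omega> \<partial>M) = 0"
    and "\<And>s t. (\<integral>\<omega>. X s \<omega> * X t \<omega> \<partial>M) = \<rho> (t - s)"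
    and "continuous_on UNIV \<rho>"
    and "(\<rho> \<longlongrightarrow> 0) at_top"
  shows "((\<lambda>T. C_p \<rho> p A T) \<longlongrightarrow> 0) at_top"
proof (rule tendstoI)
  fix e :: real assume "e > 0"
  define \<epsilon> where "\<epsilon> = (e / (2 * A)) powr (2 / p)"
  have "\<epsilon> > 0" and \<epsilon>_powr: "\<epsilon> powr (p / 2) = e / (2 * A)"
    unfolding \<epsilon>_def using \<open>p \<ge> 1\<close> \<open>e > 0\<close> \<open>A > 0\<close> by (simp_all add: powr_powr)
  show "\<forall>\<^sub>F T in at_top. dist (C_p \<rho> p A T) 0 < e"
    using psi_uniformly_small[OF assms(8,9) \<open>\<epsilon> > 0\<close>, of A]
  proof eventually_elim
    case (elim T)
    have "\<bar>psi \<rho> T \<tau> powr (p / 2)\<bar> \<le> e / (2 * A)" if "\<tau> \<in> {0..A}" for \<tau>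
    proof -
      \<comment> \<open>\<open>psi\<close> may be negative; the real \<open>ln\<close>, hence \<open>powr\<close>, is even in this library\<close>
      have "\<bar>psi \<rho> T \<tau> powr (p / 2)\<bar> = \<bar>psi \<rho> T \<tau>\<bar> powr (p / 2)"
        by (simp add: powr_def ln_real_def)
      also have "\<dots> \<le> \<epsilon> powr (p / 2)"
        using elim that \<open>p \<ge> 1\<close> by (intro powr_mono2) auto
      finally show ?thesis using \<epsilon>_powr by simp
    qed
    then have "\<bar>C_p \<rho> p A T\<bar> \<le> e / (2 * A) * (A - 0)"
      unfolding C_p_def using \<open>e > 0\<close> \<open>A > 0\<close> by (intro abs_integral_le_bound) auto
    also have "\<dots> < e" using \<open>e > 0\<close> \<open>A > 0\<close> by simp
    finally show ?case by simp
  qed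
qed

end
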